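(* Let $q$ be a prime power, let $p\ge2$ be an integer, and let $Z$ be a random vector in $\mathbb{F}_q^n$ with distribution $P_Z$. For $0\le d\le p$ define $$g(d)=\frac{1}{q^n}\sum_{x\in\mathbb{F}_q^n}\ \sum_{\substack{(v_1,\dots,v_p)\in(\mathbb{F}_q^n)^p\\ \mathrm{rank}[v_1,\dots,v_p]=d}}\ \prod_{l=1}^pP_Z(x-v_l).$$ Then for every $0\le d\le p$, $$g(d)\le\binom{p}{d}q^{(p-d)(d-H_p(Z))}.$$
   Context: The inner sum is over ordered $p$-tuples whose span has dimension exactly $d$ ($[v_1,\dots,v_p]$ is the $n\times p$ matrix with columns $v_i$). $H_p(Z)=\frac{1}{1-p}\log_q\sum_xP_Z(x)^p$. *)

theory Defs
  imports "HOL-Analysis.Analysis"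
begin

definition renyi_entropy :: "nat \<Rightarrow> ('a::{finite,field} ^ 'n \<Rightarrow> real) \<Rightarrow> real" where
  "renyi_entropy p P = (1 / (1 - real p)) * log (real CARD('a)) (\<Sum>x\<in>UNIV. P x ^ p)"

text \<open>g(d): ordered p-tuples (v_0..v_{p-1}) whose span has dimension exactly d
  (= rank of the n x p matrix with these columns).\<close>
definition gfun :: "nat \<Rightarrow> ('a::{finite,field} ^ 'n \<Rightarrow> real) \<Rightarrow> nat \<Rightarrow> real" where
  "gfun p P d = (1 / real CARD('a) ^ CARD('n)) *
     (\<Sum>x\<in>UNIV. \<Sum>v \<in> {v \<in> PiE {..<p} (\<lambda>_. UNIV). vec.dim (v ` {..<p}) = d}.
        \<Prod>l<p. P (x - v l))"

end

theory Submission
  imports Defs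
begin

text \<open>A tuple of rank d contains d coordinates, indexed by some D, forming a basis of its span,
  and the other p - d coordinates are linear combinations of them with coefficients c.
  There are (p choose d) choices of D and q^(d(p-d)) choices of c, so g(d) is at most the
  sum of the contributions of all pairs (D, c). For a fixed pair, AM-GM bounds the product of
  the p - d dependent factors by the mean of their (p - d)-th powers, which leaves sums
  \<Sum>x \<Sum>w (\<Prod>j\<in>D. P(x - w j)) P(x - \<Sum>j\<in>D. e j w j)^k with k = p - card D.
  After substituting u j = x - w j the last argument is (1 - s) x + \<Sum>j e j u j with
  s = \<Sum>j e j: for s \<noteq> 1 the x-sum is the power sum \<Sum> P^k, for s = 1 Young's inequality
  in one coordinate gives \<Sum> P^(k+1). Both are at most q^n (\<Sum> P^p)^(k/(p-1)) by the power
  mean inequality, and (\<Sum> P^p)^(1/(p-1)) = q^(-H_p).\<close>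

section \<open>Elementary inequalities\<close>

lemma power_eq_powr_power:
  fixes y :: real
  assumes "y \<ge> 0" "0 < k" "0 < m"
  shows "y ^ k = (y ^ m) powr (real k / real m)"
proof (cases "y = 0")
  case True
  then show ?thesis using assms by (simp add: zero_power)
next
  case False
  then have "y > 0" using assms by simp
  then show ?thesis using assms by (simp add: powr_realpow[symmetric] powr_powr)
qed

lemma powr_le_affine:
  fixes a \<alpha> :: real
  assumes "a \<ge> 0" "0 \<le> \<alpha>" "\<alpha> \<le> 1"
  shows "a powr \<alpha> \<le> \<alpha> * a + (1 - \<alpha>)"
  using Youngs_inequality_0[of \<alpha> "1 - \<alpha>" a 1] assms by (cases "a = 0") simp_all

lemma weighted_power_mean_le:
  fixes w X :: "'b \<Rightarrow> real"
  assumes "finite S" and w: "\<And>i. i \<in> S \<Longrightarrow> w i \<ge> 0" and X: "\<And>i. i \<in> S \<Longrightarrow> X i \<ge> 0"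
    and w1: "(\<Sum>i\<in>S. w i) = 1" and k: "0 < k" "k \<le> m"
  shows "(\<Sum>i\<in>S. w i * X i ^ k) \<le> (\<Sum>i\<in>S. w i * X i ^ m) powr (real k / real m)"
proof -
  define A where "A = (\<Sum>i\<in>S. w i * X i ^ m)"
  define \<alpha> where "\<alpha> = real k / real m"
  have A0: "A \<ge> 0" unfolding A_def using w X by (intro sum_nonneg) auto
  have \<alpha>: "0 \<le> \<alpha>" "\<alpha> \<le> 1" using k unfolding \<alpha>_def by auto
  show ?thesis
  proof (cases "A = 0")
    case True
    then have "\<forall>i\<in>S. w i * X i ^ m = 0"
      using \<open>finite S\<close> w X unfolding A_def by (subst sum_nonneg_eq_0_iff[symmetric]) auto
    then have "\<forall>i\<in>S. w i * X i ^ k = 0" using k by (auto simp: zero_power)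
    then have "(\<Sum>i\<in>S. w i * X i ^ k) = 0" by (intro sum.neutral) blast
    then show ?thesis using True by (simp add: A_def[symmetric])
  next
    case False
    with A0 have "A > 0" by simp
    have termwise: "w i * X i ^ k \<le> A powr \<alpha> * (\<alpha> / A * (w i * X i ^ m) + (1 - \<alpha>) * w i)"
      if i: "i \<in> S" for i
    proof -
      have "X i ^ k = (A * (X i ^ m / A)) powr \<alpha>"
        using power_eq_powr_power[OF X[OF i] k(1), of m] k \<open>A > 0\<close> unfolding \<alpha>_def by simp
      also have "\<dots> = A powr \<alpha> * (X i ^ m / A) powr \<alpha>"
        using \<open>A > 0\<close> X[OF i] by (subst powr_mult) auto
      also have "\<dots> \<le> A powr \<alpha> * (\<alpha> * (X i ^ m / A) + (1 - \<alpha>))"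
        using powr_le_affine[of "X i ^ m / A" \<alpha>] \<alpha> \<open>A > 0\<close> X[OF i] by (intro mult_left_mono) auto
      finally have "w i * X i ^ k \<le> w i * (A powr \<alpha> * (\<alpha> * (X i ^ m / A) + (1 - \<alpha>)))"
        using w[OF i] by (intro mult_left_mono) auto
      then show ?thesis by (simp add: algebra_simps)
    qed
    have "(\<Sum>i\<in>S. w i * X i ^ k) \<le> (\<Sum>i\<in>S. A powr \<alpha> * (\<alpha> / A * (w i * X i ^ m) + (1 - \<alpha>) * w i))"
      by (intro sum_mono termwise)
    also have "\<dots> = A powr \<alpha> * (\<alpha> / A * A + (1 - \<alpha>))"
      by (simp only: sum_distrib_left[symmetric] sum.distrib A_def[symmetric] w1
          flip: sum_distrib_left) simp
    also have "\<dots> = A powr \<alpha>" using \<open>A > 0\<close> by simp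
    finally show ?thesis unfolding A_def \<alpha>_def .
  qed
qed

lemma prod_le_mean_power_card:
  fixes a :: "'b \<Rightarrow> real"
  assumes "finite R" "R \<noteq> {}" "\<And>i. i \<in> R \<Longrightarrow> a i \<ge> 0"
  shows "(\<Prod>i\<in>R. a i) \<le> (\<Sum>i\<in>R. a i ^ card R) / real (card R)"
proof -
  have "card R > 0" using assms by (simp add: card_gt_0_iff)
  have "((\<Prod>i\<in>R. a i) ^ card R) powr (1 / card R) \<le> (\<Sum>i\<in>R. a i ^ card R / card R)"
    using arith_geom_mean[of R "\<lambda>i. a i ^ card R"] assms by (simp add: prod_power_distrib)
  moreover have "((\<Prod>i\<in>R. a i) ^ card R) powr (1 / card R) = (\<Prod>i\<in>R. a i)"
    using power_eq_powr_power[of "\<Prod>i\<in>R. a i" 1 "card R"] \<open>card R > 0\<close> assms(3)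
    by (simp add: prod_nonneg)
  ultimately show ?thesis by (simp add: sum_divide_distrib)
qed

lemma young_inequality_power:
  fixes a b :: real
  assumes "a \<ge> 0" "b \<ge> 0"
  shows "a * b ^ k \<le> a ^ (k + 1) / real (k + 1) + real k / real (k + 1) * b ^ (k + 1)"
proof (cases "a = 0 \<or> b = 0 \<or> k = 0")
  case True
  then show ?thesis using assms by (cases k) (auto simp: zero_le_mult_iff)
next
  case False
  then have "a > 0" "b > 0" "k > 0" using assms by auto
  have "(a ^ (k + 1)) powr (1 / real (k + 1)) * (b ^ (k + 1)) powr (real k / real (k + 1))
        \<le> (1 / real (k + 1)) * a ^ (k + 1) + (real k / real (k + 1)) * b ^ (k + 1)"
    using \<open>a > 0\<close> \<open>b > 0\<close> by (intro Youngs_inequality_0) (auto simp: field_simps)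
  moreover have "(a ^ (k + 1)) powr (1 / real (k + 1)) = a"
    using power_eq_powr_power[of a 1 "k + 1"] \<open>a > 0\<close> by simp
  moreover have "(b ^ (k + 1)) powr (real k / real (k + 1)) = b ^ k"
    using power_eq_powr_power[of b k "k + 1"] \<open>b > 0\<close> \<open>k > 0\<close> by simp
  ultimately show ?thesis by simp
qed

section \<open>Power sums of a distribution\<close>

abbreviation power_sum :: "('b \<Rightarrow> real) \<Rightarrow> nat \<Rightarrow> real" where
  "power_sum P r \<equiv> \<Sum>x\<in>UNIV. P x ^ r"

lemma power_sum_pos:
  fixes P :: "'b \<Rightarrow> real"
  assumes P0: "\<And>x. P x \<ge> 0" and P1: "(\<Sum>x\<in>UNIV. P x) = 1"
  shows "0 < power_sum P r"
proof -
  have "finite (UNIV :: 'b set)" using P1 by (metis sum.infinite zero_neq_one)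
  moreover obtain x0 where "P x0 \<noteq> 0" using P1 by (metis sum.neutral zero_neq_one)
  then have "P x0 > 0" using P0[of x0] by simp
  ultimately show ?thesis using P0 by (intro sum_pos2[of UNIV x0]) auto
qed

lemma power_sum_Suc_le:
  fixes P :: "'b \<Rightarrow> real"
  assumes P0: "\<And>x. P x \<ge> 0" and P1: "(\<Sum>x\<in>UNIV. P x) = 1" and "k + 1 \<le> p"
  shows "power_sum P (k + 1) \<le> power_sum P p powr (real k / real (p - 1))"
proof (cases "k = 0")
  case True
  then show ?thesis using P1 power_sum_pos[OF P0 P1, of p] by simp
next
  case False
  have "finite (UNIV :: 'b set)" using P1 by (metis sum.infinite zero_neq_one)
  then have "(\<Sum>x\<in>UNIV. P x * P x ^ k) \<le> (\<Sum>x\<in>UNIV. P x * P x ^ (p - 1)) powr (real k / real (p - 1))"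
    using False assms by (intro weighted_power_mean_le) auto
  moreover have "P x * P x ^ (p - 1) = P x ^ p" for x
    using assms by (cases p) auto
  ultimately show ?thesis by simp
qed

lemma power_sum_le:
  fixes P :: "'b::finite \<Rightarrow> real"
  assumes P0: "\<And>x. P x \<ge> 0" and P1: "(\<Sum>x\<in>UNIV. P x) = 1" and "k \<le> p" "2 \<le> p"
  shows "power_sum P k \<le> real CARD('b) * power_sum P p powr (real k / real (p - 1))"
proof (cases k)
  case 0
  then show ?thesis using power_sum_pos[OF P0 P1, of p] by simp
next
  case (Suc j)
  define M where "M = power_sum P p"
  have "M > 0" unfolding M_def using P0 P1 by (rule power_sum_pos)
  have "(\<Sum>x\<in>UNIV. P x * 1)\<^sup>2 \<le> power_sum P 2 * (\<Sum>x\<in>(UNIV :: 'b set). 1\<^sup>2)"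
    by (rule Cauchy_Schwarz_ineq_sum)
  also have "power_sum P 2 \<le> M powr (1 / real (p - 1))"
    unfolding M_def using power_sum_Suc_le[OF P0 P1, of 1 p] assms by (simp add: power2_eq_square)
  finally have "1 \<le> M powr (1 / real (p - 1)) * CARD('b)"
    using P1 by (simp add: mult_right_mono)
  then have "power_sum P k \<le> power_sum P (j + 1) * (M powr (1 / real (p - 1)) * CARD('b))"
    using power_sum_pos[OF P0 P1, of k] Suc by simp
  also have "\<dots> \<le> M powr (real j / real (p - 1)) * (M powr (1 / real (p - 1)) * CARD('b))"
    unfolding M_def using power_sum_Suc_le[OF P0 P1, of j p] assms Suc \<open>M > 0\<close>
    by (intro mult_right_mono) (auto simp: M_def)
  also have "\<dots> = CARD('b) * M powr (real k / real (p - 1))"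
    using Suc by (simp add: powr_add[symmetric] add_divide_distrib add.commute)
  finally show ?thesis unfolding M_def .
qed

lemma sum_translate:
  fixes f :: "'a::ab_group_add \<Rightarrow> 'b::comm_monoid_add"
  shows "(\<Sum>y\<in>UNIV. f (x - y)) = sum f UNIV"
  by (rule sum.reindex_bij_witness[of _ "\<lambda>z. x - z" "\<lambda>z. x - z"]) auto

lemma sum_vec_affine_reindex:
  fixes f :: "'a::field ^ 'n \<Rightarrow> 'b::comm_monoid_add"
  assumes "c \<noteq> 0"
  shows "(\<Sum>y\<in>UNIV. f (c *s y + b)) = sum f UNIV"
  using assms
  by (intro sum.reindex_bij_witness[of _ "\<lambda>z. inverse c *s (z - b)" "\<lambda>y. c *s y + b"])
     (auto simp: vector_smult_assoc)

lemma sum_mult_power_affine_le: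
  fixes P :: "'a::field ^ 'n \<Rightarrow> real"
  assumes "\<And>x. P x \<ge> 0" and "c \<noteq> 0"
  shows "(\<Sum>y\<in>UNIV. P y * P (c *s y + b) ^ k) \<le> power_sum P (k + 1)"
proof -
  have reindex: "(\<Sum>y\<in>UNIV. P (c *s y + b) ^ (k + 1)) = power_sum P (k + 1)"
    using sum_vec_affine_reindex[OF assms(2)] .
  have average: "S / real (k + 1) + real k / real (k + 1) * S = S" for S :: real
    by (simp add: field_simps del: of_nat_Suc) (simp add: algebra_simps)
  have "(\<Sum>y\<in>UNIV. P y * P (c *s y + b) ^ k) \<le>
        (\<Sum>y\<in>UNIV. P y ^ (k + 1) / real (k + 1) + real k / real (k + 1) * P (c *s y + b) ^ (k + 1))"
    using assms by (intro sum_mono young_inequality_power) auto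
  also have "\<dots> = power_sum P (k + 1) / real (k + 1) + real k / real (k + 1) * power_sum P (k + 1)"
    by (simp only: sum.distrib reindex flip: sum_divide_distrib sum_distrib_left)
  also have "\<dots> = power_sum P (k + 1)"
    by (rule average)
  finally show ?thesis .
qed

section \<open>Sums over tuples\<close>

lemma sum_le_sum_cover:
  fixes f :: "'b \<Rightarrow> 'c::ordered_comm_monoid_add"
  assumes "finite T" "finite I" "\<And>i. i \<in> I \<Longrightarrow> finite (S i)"
    and "\<And>x. x \<in> T \<Longrightarrow> \<exists>i\<in>I. x \<in> S i" and "\<And>x. 0 \<le> f x"
  shows "sum f T \<le> (\<Sum>i\<in>I. sum f (S i))"
proof -
  have "sum f T \<le> (\<Sum>(i, x)\<in>Sigma I S. f x)"
    using assms by (intro sum_le_included[where i = snd]) auto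
  then show ?thesis using assms by (simp add: sum.Sigma)
qed

lemma sum_PiE_prod_eq_1:
  fixes P :: "'b::finite \<Rightarrow> real"
  assumes "(\<Sum>x\<in>UNIV. P x) = 1" and "finite D"
  shows "(\<Sum>u\<in>PiE D (\<lambda>_. UNIV). \<Prod>j\<in>D. P (u j)) = 1"
  using prod_sum_PiE[OF assms(2), of "\<lambda>_. UNIV" "\<lambda>_ y. P y"] assms(1) by simp

lemma sum_PiE_insert:
  assumes "j \<notin> D"
  shows "(\<Sum>u\<in>PiE (insert j D) (\<lambda>_. UNIV). f u) = (\<Sum>y\<in>UNIV. \<Sum>g\<in>PiE D (\<lambda>_. UNIV). f (g(j := y)))"
proof -
  have "(\<Sum>u\<in>PiE (insert j D) (\<lambda>_. UNIV). f u) = (\<Sum>(y, g)\<in>UNIV \<times> PiE D (\<lambda>_. UNIV). f (g(j := y)))"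
    using assms
    by (intro sum.reindex_bij_witness[of _ "\<lambda>(y, g). g(j := y)" "\<lambda>g. (g j, g(j := undefined))"])
       (auto simp: PiE_def extensional_def)
  then show ?thesis by (simp add: sum.cartesian_product)
qed

lemma sum_PiE_reflect:
  fixes x :: "'b::ab_group_add"
  shows "(\<Sum>w\<in>PiE D (\<lambda>_. UNIV). f w) = (\<Sum>u\<in>PiE D (\<lambda>_. UNIV). f (restrict (\<lambda>j. x - u j) D))"
  by (rule sum.reindex_bij_witness[of _ "\<lambda>w. restrict (\<lambda>j. x - w j) D" "\<lambda>w. restrict (\<lambda>j. x - w j) D"])
     (auto simp: PiE_def extensional_def fun_eq_iff intro!: arg_cong[of _ _ f])

lemma sum_PiE_prod_mult_power_lincomb_le:
  fixes P :: "'a::{finite,field} ^ 'n \<Rightarrow> real" and e :: "nat \<Rightarrow> 'a"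
  assumes P0: "\<And>x. P x \<ge> 0" and P1: "(\<Sum>x\<in>UNIV. P x) = 1"
    and "finite D" and "j \<in> D" and "e j \<noteq> 0"
  shows "(\<Sum>u\<in>PiE D (\<lambda>_. UNIV). (\<Prod>i\<in>D. P (u i)) * P (\<Sum>i\<in>D. e i *s u i) ^ k)
         \<le> power_sum P (k + 1)"
proof -
  define D' where "D' = D - {j}"
  have D: "D = insert j D'" "j \<notin> D'" "finite D'" using assms unfolding D'_def by auto
  define A where "A g = (\<Prod>i\<in>D'. P (g i))" for g :: "nat \<Rightarrow> 'a ^ 'n"
  define b where "b g = (\<Sum>i\<in>D'. e i *s g i)" for g :: "nat \<Rightarrow> 'a ^ 'n"
  have split: "(\<Prod>i\<in>D. P ((g(j := y)) i)) * P (\<Sum>i\<in>D. e i *s (g(j := y)) i) ^ k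
      = A g * (P y * P (e j *s y + b g) ^ k)" for g y
  proof -
    have "(\<Prod>i\<in>D'. P ((g(j := y)) i)) = A g" "(\<Sum>i\<in>D'. e i *s (g(j := y)) i) = b g"
      unfolding A_def b_def using D by (auto intro!: prod.cong sum.cong)
    then show ?thesis using D by simp
  qed
  have "(\<Sum>u\<in>PiE D (\<lambda>_. UNIV). (\<Prod>i\<in>D. P (u i)) * P (\<Sum>i\<in>D. e i *s u i) ^ k)
      = (\<Sum>y\<in>UNIV. \<Sum>g\<in>PiE D' (\<lambda>_. UNIV). A g * (P y * P (e j *s y + b g) ^ k))"
    unfolding split[symmetric] by (subst (1) D(1), rule sum_PiE_insert[OF D(2)])
  also have "\<dots> = (\<Sum>g\<in>PiE D' (\<lambda>_. UNIV). A g * (\<Sum>y\<in>UNIV. P y * P (e j *s y + b g) ^ k))"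
    by (subst sum.swap) (simp add: sum_distrib_left)
  also have "\<dots> \<le> (\<Sum>g\<in>PiE D' (\<lambda>_. UNIV). A g * power_sum P (k + 1))"
  proof (rule sum_mono)
    fix g
    show "A g * (\<Sum>y\<in>UNIV. P y * P (e j *s y + b g) ^ k) \<le> A g * power_sum P (k + 1)"
      by (rule mult_left_mono[OF sum_mult_power_affine_le[OF P0 \<open>e j \<noteq> 0\<close>]])
         (auto simp: A_def P0 intro: prod_nonneg)
  qed
  also have "\<dots> = power_sum P (k + 1)"
    unfolding A_def using sum_PiE_prod_eq_1[OF P1 D(3)] by (simp flip: sum_distrib_right)
  finally show ?thesis .
qed

lemma sum_PiE_shifted_prod_mult_power_eq:
  fixes P :: "'a::field ^ 'n \<Rightarrow> real" and e :: "nat \<Rightarrow> 'a"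
  shows "(\<Sum>w\<in>PiE D (\<lambda>_. UNIV). (\<Prod>j\<in>D. P (x - w j)) * P (x - (\<Sum>j\<in>D. e j *s w j)) ^ k)
       = (\<Sum>u\<in>PiE D (\<lambda>_. UNIV).
            (\<Prod>j\<in>D. P (u j)) * P ((1 - sum e D) *s x + (\<Sum>j\<in>D. e j *s u j)) ^ k)"
proof (subst sum_PiE_reflect[of _ _ x], intro sum.cong refl)
  fix u :: "nat \<Rightarrow> 'a ^ 'n"
  have "(\<Sum>j\<in>D. e j *s restrict (\<lambda>j. x - u j) D j) = sum e D *s x - (\<Sum>j\<in>D. e j *s u j)"
    by (simp add: sum_subtractf vec.scale_sum_left)
  then have "x - (\<Sum>j\<in>D. e j *s restrict (\<lambda>j. x - u j) D j)
      = (1 - sum e D) *s x + (\<Sum>j\<in>D. e j *s u j)"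
    by (simp add: vec.scale_left_diff_distrib)
  moreover have "(\<Prod>j\<in>D. P (x - restrict (\<lambda>j. x - u j) D j)) = (\<Prod>j\<in>D. P (u j))"
    by (intro prod.cong) auto
  ultimately show "(\<Prod>j\<in>D. P (x - restrict (\<lambda>j. x - u j) D j))
      * P (x - (\<Sum>j\<in>D. e j *s restrict (\<lambda>j. x - u j) D j)) ^ k
    = (\<Prod>j\<in>D. P (u j)) * P ((1 - sum e D) *s x + (\<Sum>j\<in>D. e j *s u j)) ^ k"
    by (simp only:)
qed

lemma sum_shifted_prod_mult_power_lincomb_le:
  fixes P :: "'a::{finite,field} ^ 'n \<Rightarrow> real" and e :: "nat \<Rightarrow> 'a"
  assumes P0: "\<And>x. P x \<ge> 0" and P1: "(\<Sum>x\<in>UNIV. P x) = 1" and "2 \<le> p"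
    and "finite D" and "k + card D \<le> p"
  shows "(\<Sum>x\<in>UNIV. \<Sum>w\<in>PiE D (\<lambda>_. UNIV). (\<Prod>j\<in>D. P (x - w j)) * P (x - (\<Sum>j\<in>D. e j *s w j)) ^ k)
     \<le> real CARD('a) ^ CARD('n) * power_sum P p powr (real k / real (p - 1))"
proof -
  define s where "s = sum e D"
  define A where "A u = (\<Prod>j\<in>D. P (u j))" for u :: "nat \<Rightarrow> 'a ^ 'n"
  define b where "b u = (\<Sum>j\<in>D. e j *s u j)" for u :: "nat \<Rightarrow> 'a ^ 'n"
  define N where "N = real CARD('a) ^ CARD('n)"
  define M where "M = power_sum P p powr (real k / real (p - 1))"
  have "(\<Sum>x\<in>UNIV. \<Sum>w\<in>PiE D (\<lambda>_. UNIV). (\<Prod>j\<in>D. P (x - w j)) * P (x - (\<Sum>j\<in>D. e j *s w j)) ^ k)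
      = (\<Sum>u\<in>PiE D (\<lambda>_. UNIV). A u * (\<Sum>x\<in>UNIV. P ((1 - s) *s x + b u) ^ k))"
    unfolding sum_PiE_shifted_prod_mult_power_eq A_def b_def s_def
    by (simp add: sum.swap[of _ UNIV] sum_distrib_left)
  also have "\<dots> \<le> N * M"
  proof (cases "s = 1")
    case False
    have "(\<Sum>x\<in>UNIV. P ((1 - s) *s x + b u) ^ k) = power_sum P k" for u
      using sum_vec_affine_reindex[of "1 - s" "\<lambda>z. P z ^ k" "b u"] False by simp
    then have "(\<Sum>u\<in>PiE D (\<lambda>_. UNIV). A u * (\<Sum>x\<in>UNIV. P ((1 - s) *s x + b u) ^ k))
        = (\<Sum>u\<in>PiE D (\<lambda>_. UNIV). A u) * power_sum P k"
      by (simp add: sum_distrib_right)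
    also have "\<dots> = power_sum P k"
      using sum_PiE_prod_eq_1[OF P1 \<open>finite D\<close>] unfolding A_def by simp
    also have "\<dots> \<le> N * M"
      unfolding N_def M_def using power_sum_le[OF P0 P1, of k p] assms by simp
    finally show ?thesis .
  next
    case True
    then obtain j where j: "j \<in> D" "e j \<noteq> 0"
      unfolding s_def by (metis sum.neutral zero_neq_one)
    then have "k + 1 \<le> p" using assms card_gt_0_iff[of D] by auto
    from True have "(\<Sum>u\<in>PiE D (\<lambda>_. UNIV). A u * (\<Sum>x\<in>UNIV. P ((1 - s) *s x + b u) ^ k))
        = N * (\<Sum>u\<in>PiE D (\<lambda>_. UNIV). A u * P (b u) ^ k)"
      unfolding N_def by (simp add: sum_distrib_left algebra_simps)
    also have "\<dots> \<le> N * power_sum P (k + 1)"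
      unfolding A_def b_def N_def
      by (intro mult_left_mono sum_PiE_prod_mult_power_lincomb_le[where e=e, OF P0 P1 \<open>finite D\<close> j]) auto
    also have "\<dots> \<le> N * M"
      unfolding N_def M_def using power_sum_Suc_le[OF P0 P1 \<open>k + 1 \<le> p\<close>] by simp
    finally show ?thesis .
  qed
  finally show ?thesis unfolding N_def M_def .
qed

section \<open>Tuples of given rank\<close>

definition coefficient_choices :: "nat \<Rightarrow> nat set \<Rightarrow> (nat \<Rightarrow> nat \<Rightarrow> 'a) set" where
  "coefficient_choices p D = PiE ({..<p} - D) (\<lambda>_. PiE D (\<lambda>_. UNIV))"

lemma finite_coefficient_choices:
  assumes "D \<subseteq> {..<p}"
  shows "finite (coefficient_choices p D :: (nat \<Rightarrow> nat \<Rightarrow> 'a::finite) set)"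
  using assms unfolding coefficient_choices_def by (intro finite_PiE) (auto intro: finite_subset)

lemma card_coefficient_choices:
  assumes "D \<subseteq> {..<p}" "card D = d"
  shows "card (coefficient_choices p D :: (nat \<Rightarrow> nat \<Rightarrow> 'a::finite) set) = CARD('a) ^ (d * (p - d))"
  using assms unfolding coefficient_choices_def
  by (simp add: card_PiE card_Diff_subset finite_subset power_mult mult.commute)

definition spanned_tuples :: "nat \<Rightarrow> nat set \<Rightarrow> (nat \<Rightarrow> nat \<Rightarrow> 'a::field) \<Rightarrow> (nat \<Rightarrow> 'a ^ 'n) set" where
  "spanned_tuples p D c =
     {v \<in> PiE {..<p} (\<lambda>_. UNIV). \<forall>l\<in>{..<p} - D. v l = (\<Sum>j\<in>D. c l j *s v j)}"

lemma rank_tuple_in_spanned_tuples: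
  fixes v :: "nat \<Rightarrow> 'a::field ^ 'n"
  assumes v: "v \<in> PiE {..<p} (\<lambda>_. UNIV)" and "vec.dim (v ` {..<p}) = d"
  shows "\<exists>D c. D \<subseteq> {..<p} \<and> card D = d \<and> c \<in> coefficient_choices p D \<and> v \<in> spanned_tuples p D c"
proof -
  obtain B where B: "B \<subseteq> v ` {..<p}" "v ` {..<p} \<subseteq> vec.span B" "card B = d"
    using vec.basis_exists[of "v ` {..<p}"] assms(2) by metis
  define D where "D = inv_into {..<p} v ` B"
  have "D \<subseteq> {..<p}" unfolding D_def using B(1) inv_into_into[of _ v "{..<p}"] by blast
  have vD: "v ` D = B" unfolding D_def using B(1)
    by (auto simp: image_image f_inv_into_f intro!: image_eqI)
  have "card D = d" unfolding D_def using card_image[OF inj_on_inv_into[OF B(1)]] B(3) by simp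
  then have "inj_on v D" using vD B(3) \<open>D \<subseteq> {..<p}\<close>
    by (simp add: eq_card_imp_inj_on finite_subset)
  have "\<exists>cl. v l = (\<Sum>j\<in>D. cl j *s v j)" if l: "l \<in> {..<p} - D" for l
  proof -
    have "finite B" using B(1) finite_subset by blast
    obtain u where "v l = (\<Sum>b\<in>B. u b *s b)"
      using vec.span_finite[OF \<open>finite B\<close>] B(2) l by auto
    also have "\<dots> = (\<Sum>j\<in>D. u (v j) *s v j)"
      unfolding vD[symmetric] by (rule sum.reindex[OF \<open>inj_on v D\<close>, unfolded comp_def])
    finally show ?thesis by (intro exI[of _ "\<lambda>j. u (v j)"])
  qed
  then obtain f where f: "\<forall>l\<in>{..<p} - D. v l = (\<Sum>j\<in>D. f l j *s v j)" by metis
  define c where "c = restrict (\<lambda>l. restrict (f l) D) ({..<p} - D)"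
  have "c \<in> coefficient_choices p D" unfolding c_def coefficient_choices_def by auto
  moreover have "v \<in> spanned_tuples p D c"
    using v f unfolding spanned_tuples_def c_def by auto
  ultimately show ?thesis using \<open>D \<subseteq> {..<p}\<close> \<open>card D = d\<close> by blast
qed

lemma sum_spanned_tuples_prod_eq:
  fixes f :: "'a::field ^ 'n \<Rightarrow> 'b::comm_semiring_1"
  assumes "D \<subseteq> {..<p}"
  shows "(\<Sum>v\<in>spanned_tuples p D c. \<Prod>l<p. f (v l))
       = (\<Sum>w\<in>PiE D (\<lambda>_. UNIV). (\<Prod>j\<in>D. f (w j)) * (\<Prod>l\<in>{..<p} - D. f (\<Sum>j\<in>D. c l j *s w j)))"
proof -
  define ext where
    "ext w = (\<lambda>l. if l \<in> D then w l else if l < p then (\<Sum>j\<in>D. c l j *s w j) else undefined)"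
    for w :: "nat \<Rightarrow> 'a ^ 'n"
  have "(\<Sum>v\<in>spanned_tuples p D c. \<Prod>l<p. f (v l)) = (\<Sum>w\<in>PiE D (\<lambda>_. UNIV). \<Prod>l<p. f (ext w l))"
  proof (rule sum.reindex_bij_witness[of _ ext "\<lambda>v. restrict v D"])
    fix v :: "nat \<Rightarrow> 'a ^ 'n" assume v: "v \<in> spanned_tuples p D c"
    then show "ext (restrict v D) = v"
      using assms unfolding ext_def spanned_tuples_def
      by (auto simp: PiE_def extensional_def fun_eq_iff intro!: sum.cong)
    then show "(\<Prod>l<p. f (ext (restrict v D) l)) = (\<Prod>l<p. f (v l))" by simp
  next
    fix w :: "nat \<Rightarrow> 'a ^ 'n" assume "w \<in> PiE D (\<lambda>_. UNIV)"
    then show "restrict (ext w) D = w"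
      unfolding ext_def by (auto simp: PiE_def extensional_def fun_eq_iff)
    show "ext w \<in> spanned_tuples p D c"
      using assms unfolding ext_def spanned_tuples_def
      by (auto simp: PiE_def extensional_def intro!: sum.cong)
  qed simp
  also have "\<dots> = (\<Sum>w\<in>PiE D (\<lambda>_. UNIV). (\<Prod>j\<in>D. f (w j)) * (\<Prod>l\<in>{..<p} - D. f (\<Sum>j\<in>D. c l j *s w j)))"
  proof (rule sum.cong[OF refl])
    fix w
    have "(\<Prod>l<p. f (ext w l)) = (\<Prod>l\<in>{..<p} - D. f (ext w l)) * (\<Prod>l\<in>D. f (ext w l))"
      using assms by (intro prod.subset_diff) auto
    also have "\<dots> = (\<Prod>l\<in>{..<p} - D. f (\<Sum>j\<in>D. c l j *s w j)) * (\<Prod>j\<in>D. f (w j))"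
      unfolding ext_def by (intro arg_cong2[where f = "(*)"] prod.cong) auto
    finally show "(\<Prod>l<p. f (ext w l))
        = (\<Prod>j\<in>D. f (w j)) * (\<Prod>l\<in>{..<p} - D. f (\<Sum>j\<in>D. c l j *s w j))"
      by (simp add: mult.commute)
  qed
  finally show ?thesis .
qed

lemma sum_spanned_tuples_le:
  fixes P :: "'a::{finite,field} ^ 'n \<Rightarrow> real"
  assumes P0: "\<And>x. P x \<ge> 0" and P1: "(\<Sum>x\<in>UNIV. P x) = 1" and "2 \<le> p"
    and "D \<subseteq> {..<p}" and "card D < p"
  shows "(\<Sum>x\<in>UNIV. \<Sum>v\<in>spanned_tuples p D c. \<Prod>l<p. P (x - v l))
     \<le> real CARD('a) ^ CARD('n) * power_sum P p powr (real (p - card D) / real (p - 1))"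
proof -
  define R where "R = {..<p} - D"
  define k where "k = p - card D"
  define B where "B = real CARD('a) ^ CARD('n) * power_sum P p powr (real k / real (p - 1))"
  define a where "a x w l = P (x - (\<Sum>j\<in>D. c l j *s w j))" for x and w :: "nat \<Rightarrow> 'a ^ 'n" and l
  have "finite D" using \<open>D \<subseteq> {..<p}\<close> finite_subset by blast
  have "card R = k" "k > 0"
    unfolding R_def k_def using assms \<open>finite D\<close> by (simp_all add: card_Diff_subset)
  then have "R \<noteq> {}" by auto
  have "(\<Sum>x\<in>UNIV. \<Sum>v\<in>spanned_tuples p D c. \<Prod>l<p. P (x - v l))
      = (\<Sum>x\<in>UNIV. \<Sum>w\<in>PiE D (\<lambda>_. UNIV). (\<Prod>j\<in>D. P (x - w j)) * (\<Prod>l\<in>R. a x w l))"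
    unfolding R_def a_def using sum_spanned_tuples_prod_eq[OF \<open>D \<subseteq> {..<p}\<close>, of "\<lambda>y. P (x - y)" c for x]
    by simp
  also have "\<dots> \<le> (\<Sum>x\<in>UNIV. \<Sum>w\<in>PiE D (\<lambda>_. UNIV). (\<Prod>j\<in>D. P (x - w j)) * ((\<Sum>l\<in>R. a x w l ^ k) / real k))"
    using prod_le_mean_power_card[OF _ \<open>R \<noteq> {}\<close>] \<open>card R = k\<close> P0
    by (intro sum_mono mult_left_mono) (auto simp: a_def R_def intro: prod_nonneg)
  also have "\<dots> = (\<Sum>l\<in>R. \<Sum>x\<in>UNIV. \<Sum>w\<in>PiE D (\<lambda>_. UNIV). (\<Prod>j\<in>D. P (x - w j)) * a x w l ^ k) / real k"
    by (simp add: sum_divide_distrib sum_distrib_left sum.swap[of _ R])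
  also have "\<dots> \<le> (\<Sum>l\<in>R. B) / real k"
    unfolding a_def B_def using assms \<open>finite D\<close>
    by (intro divide_right_mono sum_mono sum_shifted_prod_mult_power_lincomb_le) (auto simp: k_def)
  also have "\<dots> = B" using \<open>card R = k\<close> \<open>k > 0\<close> by simp
  finally show ?thesis unfolding B_def k_def .
qed

lemma gfun_le_one:
  fixes P :: "'a::{finite,field} ^ 'n \<Rightarrow> real"
  assumes P0: "\<And>x. P x \<ge> 0" and P1: "(\<Sum>x\<in>UNIV. P x) = 1"
  shows "gfun p P d \<le> 1"
proof -
  let ?F = "\<lambda>x v. \<Prod>l<p. P (x - v l)"
  have "(\<Sum>x\<in>UNIV. \<Sum>v\<in>{v \<in> PiE {..<p} (\<lambda>_. UNIV). vec.dim (v ` {..<p}) = d}. ?F x v)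
      \<le> (\<Sum>x\<in>UNIV. \<Sum>v\<in>PiE {..<p} (\<lambda>_. UNIV). ?F x v)"
    using P0 by (intro sum_mono sum_mono2) (auto simp: finite_PiE intro: prod_nonneg)
  also have "\<dots> = (\<Sum>x\<in>UNIV. \<Prod>l<p. \<Sum>y\<in>UNIV. P (x - y))"
    by (intro sum.cong refl prod_sum_PiE[symmetric]) auto
  also have "\<dots> = real CARD('a) ^ CARD('n)"
    using P1 by (simp add: sum_translate)
  finally show ?thesis unfolding gfun_def by (simp add: divide_simps)
qed

lemma gfun_le_binomial_power_sum:
  fixes P :: "'a::{finite,field} ^ 'n \<Rightarrow> real"
  assumes P0: "\<And>x. P x \<ge> 0" and P1: "(\<Sum>x\<in>UNIV. P x) = 1" and "2 \<le> p" and "d < p"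
  shows "gfun p P d
    \<le> real (p choose d) * real CARD('a) ^ (d * (p - d)) * power_sum P p powr (real (p - d) / real (p - 1))"
proof -
  define N where "N = real CARD('a) ^ CARD('n)"
  define B where "B = N * power_sum P p powr (real (p - d) / real (p - 1))"
  define T where "T = {v \<in> PiE {..<p} (\<lambda>_. UNIV :: ('a ^ 'n) set). vec.dim (v ` {..<p}) = d}"
  define I :: "(nat set \<times> (nat \<Rightarrow> nat \<Rightarrow> 'a)) set"
    where "I = Sigma {D. D \<subseteq> {..<p} \<and> card D = d} (coefficient_choices p)"
  define G where "G v = (\<Sum>x\<in>UNIV. \<Prod>l<p. P (x - v l))" for v :: "nat \<Rightarrow> 'a ^ 'n"
  have "finite I"
    unfolding I_def by (intro finite_SigmaI) (auto simp: finite_coefficient_choices)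
  have "card I = (p choose d) * CARD('a) ^ (d * (p - d))"
    unfolding I_def using n_subsets[of "{..<p}" d]
    by (subst card_SigmaI) (auto simp: finite_coefficient_choices card_coefficient_choices)
  have "(\<Sum>x\<in>UNIV. \<Sum>v\<in>T. \<Prod>l<p. P (x - v l)) = sum G T"
    unfolding G_def by (rule sum.swap)
  also have "\<dots> \<le> (\<Sum>i\<in>I. sum G (spanned_tuples p (fst i) (snd i)))"
  proof (rule sum_le_sum_cover)
    show "finite T" unfolding T_def by (simp add: finite_PiE)
    show "finite (spanned_tuples p (fst i) (snd i) :: (nat \<Rightarrow> 'a ^ 'n) set)" for i
      unfolding spanned_tuples_def by (simp add: finite_PiE)
    show "\<exists>i\<in>I. v \<in> spanned_tuples p (fst i) (snd i)" if "v \<in> T" for v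
      using rank_tuple_in_spanned_tuples[of v p d] that unfolding T_def I_def by force
    show "0 \<le> G v" for v unfolding G_def using P0 by (intro sum_nonneg prod_nonneg) auto
  qed fact
  also have "\<dots> \<le> (\<Sum>i\<in>I. B)"
  proof (rule sum_mono)
    fix i assume "i \<in> I"
    then have "fst i \<subseteq> {..<p}" "card (fst i) = d" unfolding I_def by auto
    then show "sum G (spanned_tuples p (fst i) (snd i)) \<le> B"
      using sum_spanned_tuples_le[OF P0 P1 \<open>2 \<le> p\<close> \<open>fst i \<subseteq> {..<p}\<close>, of "snd i"] \<open>d < p\<close>
      unfolding G_def B_def N_def by (simp add: sum.swap[of _ UNIV])
  qed
  finally show ?thesis
    using \<open>card I = _\<close> unfolding gfun_def T_def B_def N_def by (simp add: divide_simps mult_ac)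
qed

lemma card_field_ge_2: "2 \<le> CARD('a::{finite,field})"
  using card_mono[of UNIV "{0::'a, 1}"] by simp

lemma powr_renyi_exponent_eq:
  fixes P :: "'a::{finite,field} ^ 'n \<Rightarrow> real"
  assumes P0: "\<And>x. P x \<ge> 0" and P1: "(\<Sum>x\<in>UNIV. P x) = 1" and "2 \<le> p" and "d \<le> p"
  shows "real CARD('a) powr ((real p - real d) * (real d - renyi_entropy p P))
       = real CARD('a) ^ (d * (p - d)) * power_sum P p powr (real (p - d) / real (p - 1))"
proof -
  define q where "q = real CARD('a)"
  define M where "M = power_sum P p"
  have "q > 1" unfolding q_def using card_field_ge_2[where 'a = 'a] by simp
  have "M > 0" unfolding M_def using P0 P1 by (rule power_sum_pos)
  have "(real p - real d) * (real d - renyi_entropy p P)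
      = real (d * (p - d)) + real (p - d) / real (p - 1) * log q M"
    using assms unfolding renyi_entropy_def q_def M_def by (simp add: of_nat_diff field_simps)
  then have "q powr ((real p - real d) * (real d - renyi_entropy p P))
      = q powr real (d * (p - d)) * (q powr log q M) powr (real (p - d) / real (p - 1))"
    by (simp add: powr_add powr_powr mult.commute)
  also have "\<dots> = q ^ (d * (p - d)) * M powr (real (p - d) / real (p - 1))"
    using \<open>q > 1\<close> \<open>M > 0\<close> powr_realpow[of q "d * (p - d)"] by simp
  finally show ?thesis unfolding q_def M_def .
qed

theorem mainTheorem13:
  fixes P :: "'a::{finite,field} ^ 'n \<Rightarrow> real" and p d :: nat
  assumes "\<And>x. P x \<ge> 0" and "(\<Sum>x\<in>UNIV. P x) = 1"
    and "p \<ge> 2" and "d \<le> p"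
  shows "gfun p P d \<le> real (p choose d) *
           real CARD('a) powr ((real p - real d) * (real d - renyi_entropy p P))"
proof (cases "d = p")
  case True
  then show ?thesis
    using gfun_le_one[OF assms(1,2)] powr_renyi_exponent_eq[OF assms] by simp
next
  case False
  with assms(4) have "d < p" by simp
  then show ?thesis
    using gfun_le_binomial_power_sum[OF assms(1-3) \<open>d < p\<close>] powr_renyi_exponent_eq[OF assms]
    by (simp add: mult.assoc)
qed

end
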